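(* Let $T$ be a decomposition tree of a distance-hereditary graph $G$, and let $v$ be an internal node of $T$ labeled $\oplus$ with left child $v_l$ and right child $v_r$, such that property (P) holds at $v_l$ and at $v_r$. Assume $\hat\alpha(v_r)>\hat\beta(v_l)$. Then $\hat{min}(v)=\hat{min}(v_l)+\hat{min}(v_r)+\hat\alpha(v_r)-\hat\beta(v_l)$.
   Context: All graphs are finite, simple, undirected. For a graph $H$ and $S\subseteq V(H)$, $N_H[S]$ is $S$ together with all vertices adjacent to a vertex of $S$, and $H[S]$ is the induced subgraph. Graphs carry a "twin set": a single-vertex graph on $x$ has twin set $\{x\}$. For vertex-disjoint graphs $G_l,G_r$ with twin sets $TS(G_l),TS(G_r)$: the true twin operation $G_l\otimes G_r$ has vertex set $V(G_l)\cup V(G_r)$, edge set $E(G_l)\cup E(G_r)\cup\{uw: u\in TS(G_l), w\in TS(G_r)\}$ and twin set $TS(G_l)\cup TS(G_r)$; the false twin operation $G_l\odot G_r$ has vertex set $V(G_l)\cup V(G_r)$, edge set $E(G_l)\cup E(G_r)$, twin set $TS(G_l)\cup TS(G_r)$; the attachment operation $G_l\oplus G_r$ has the same vertex and edge sets as $G_l\otimes G_r$ and twin set $TS(G_l)$. A decomposition tree $T$ of $G$ is a rooted binary tree whose leaves are in bijection with $V(G)$, each internal node having a left and a right child and a label in $\{\otimes,\odot,\oplus\}$; for each node $v$ define $\hat G(v)$ and $\hat{TS}(v)$ recursively: for a leaf $x$, the single-vertex graph on $x$ with twin set $\{x\}$; for an internal node $v$ with label $\circ$ and children $v_l,v_r$,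 $\hat G(v)=\hat G(v_l)\circ\hat G(v_r)$ with the corresponding twin set; one requires $\hat G(\text{root})=G$. Then $\hat G(v)$ is the subgraph of $G$ induced by the set $\hat V(v)$ of leaves below $v$. For a node $u$ and $0\le k\le|\hat{TS}(u)|$, call $S\subseteq\hat V(u)$ $k$-feasible if $\hat V(u)\setminus\hat{TS}(u)\subseteq N_{\hat G(u)}[S]$ and there is $X\subseteq S\cap\hat{TS}(u)$ with $|X|=k$ such that $\hat G(u)[S\setminus X]$ has a perfect matching. $\hat\gamma_k(u)$ is the minimum size of a $k$-feasible set. $\hat{min}(u)=\min\{\hat\gamma_k(u):0\le k\le|\hat{TS}(u)|\}$, and $\hat\alpha(u)$, $\hat\beta(u)$ are the smallest and the largest $k$ with $\hat\gamma_k(u)=\hat{min}(u)$. Property (P) holds at $u$ if for every $0\le k\le|\hat{TS}(u)|$: $\hat\gamma_k(u)=\hat{min}(u)+\hat\alpha(u)-k$ when $k\le\hat\alpha(u)$; $\hat\gamma_k(u)=\hat{min}(u)+k-\hat\beta(u)$ when $k\ge\hat\beta(u)$; $\hat\gamma_k(u)=\hat{min}(u)$ when $\hat\alpha(u)<k<\hat\beta(u)$ and $k-\hat\alpha(u)$ is even; and $\hat\gamma_k(u)=\hat{min}(u)+1$ otherwise. *)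

theory Defs
  imports Main "HOL-Library.Extended_Nat"
begin

text \<open>A finite simple graph is a pair (V, E) with E a set of 2-element subsets of V.\<close>

type_synonym 'a graph = "'a set \<times> 'a set set"

definition adj :: "'a graph \<Rightarrow> 'a \<Rightarrow> 'a \<Rightarrow> bool" where
  "adj G u w \<longleftrightarrow> {u, w} \<in> snd G"

definition closed_nbhd :: "'a graph \<Rightarrow> 'a set \<Rightarrow> 'a set" where
  "closed_nbhd G S = S \<union> {w \<in> fst G. \<exists>u\<in>S. adj G u w}"

definition induced :: "'a graph \<Rightarrow> 'a set \<Rightarrow> 'a graph" where
  "induced G S = (S \<inter> fst G, {e \<in> snd G. e \<subseteq> S})"

definition perfect_matching :: "'a graph \<Rightarrow> 'a set set \<Rightarrow> bool" where
  "perfect_matching G M \<longleftrightarrow> M \<subseteq> snd G \<and>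
     (\<forall>e1\<in>M. \<forall>e2\<in>M. e1 \<noteq> e2 \<longrightarrow> e1 \<inter> e2 = {}) \<and> \<Union>M = fst G"

definition has_perfect_matching :: "'a graph \<Rightarrow> bool" where
  "has_perfect_matching G \<longleftrightarrow> (\<exists>M. perfect_matching G M)"

definition walk_in :: "'a graph \<Rightarrow> 'a set \<Rightarrow> 'a list \<Rightarrow> bool" where
  "walk_in G S p \<longleftrightarrow> p \<noteq> [] \<and> set p \<subseteq> S \<inter> fst G \<and>
     (\<forall>i. Suc i < length p \<longrightarrow> adj G (p ! i) (p ! Suc i))"

definition connected_in :: "'a graph \<Rightarrow> 'a set \<Rightarrow> bool" where
  "connected_in G S \<longleftrightarrow> (\<forall>u\<in>S. \<forall>w\<in>S. \<exists>p. walk_in G S p \<and> hd p = u \<and> last p = w)"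

definition dist_in :: "'a graph \<Rightarrow> 'a set \<Rightarrow> 'a \<Rightarrow> 'a \<Rightarrow> nat" where
  "dist_in G S u w = (LEAST n. \<exists>p. walk_in G S p \<and> hd p = u \<and> last p = w \<and> length p = Suc n)"

definition distance_hereditary :: "'a graph \<Rightarrow> bool" where
  "distance_hereditary G \<longleftrightarrow>
     (\<forall>S \<subseteq> fst G. connected_in G S \<longrightarrow>
        (\<forall>u\<in>S. \<forall>w\<in>S. dist_in G S u w = dist_in G (fst G) u w))"

datatype op = TrueTwin | FalseTwin | Attach

datatype 'a dtree = Leaf 'a | Node op "'a dtree" "'a dtree"

fun tverts :: "'a dtree \<Rightarrow> 'a set" where
  "tverts (Leaf x) = {x}"
| "tverts (Node _ l r) = tverts l \<union> tverts r"

fun tTS :: "'a dtree \<Rightarrow> 'a set" where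
  "tTS (Leaf x) = {x}"
| "tTS (Node TrueTwin l r) = tTS l \<union> tTS r"
| "tTS (Node FalseTwin l r) = tTS l \<union> tTS r"
| "tTS (Node Attach l r) = tTS l"

fun tedges :: "'a dtree \<Rightarrow> 'a set set" where
  "tedges (Leaf x) = {}"
| "tedges (Node TrueTwin l r) = tedges l \<union> tedges r \<union> {{u, w} | u w. u \<in> tTS l \<and> w \<in> tTS r}"
| "tedges (Node FalseTwin l r) = tedges l \<union> tedges r"
| "tedges (Node Attach l r) = tedges l \<union> tedges r \<union> {{u, w} | u w. u \<in> tTS l \<and> w \<in> tTS r}"

definition tgraph :: "'a dtree \<Rightarrow> 'a graph" where
  "tgraph t = (tverts t, tedges t)"

text \<open>Children must be vertex-disjoint (leaves in bijection with vertices).\<close>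
fun wf_dtree :: "'a dtree \<Rightarrow> bool" where
  "wf_dtree (Leaf x) = True"
| "wf_dtree (Node _ l r) \<longleftrightarrow> wf_dtree l \<and> wf_dtree r \<and> tverts l \<inter> tverts r = {}"

definition decomposition_tree :: "'a dtree \<Rightarrow> 'a graph \<Rightarrow> bool" where
  "decomposition_tree T G \<longleftrightarrow> wf_dtree T \<and> tgraph T = G"

text \<open>Nodes of a tree, identified with the subtrees rooted at them.\<close>
fun nodes :: "'a dtree \<Rightarrow> 'a dtree set" where
  "nodes (Leaf x) = {Leaf x}"
| "nodes (Node c l r) = insert (Node c l r) (nodes l \<union> nodes r)"

definition k_feasible :: "'a dtree \<Rightarrow> nat \<Rightarrow> 'a set \<Rightarrow> bool" where
  "k_feasible u k S \<longleftrightarrow> S \<subseteq> tverts u \<and>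
     tverts u - tTS u \<subseteq> closed_nbhd (tgraph u) S \<and>
     (\<exists>X. X \<subseteq> S \<inter> tTS u \<and> card X = k \<and>
          has_perfect_matching (induced (tgraph u) (S - X)))"

text \<open>Minimum size of a k-feasible set (\<open>\<infinity>\<close> if none exists).\<close>
definition gamma_hat :: "'a dtree \<Rightarrow> nat \<Rightarrow> enat" where
  "gamma_hat u k = (INF S \<in> {S. k_feasible u k S}. enat (card S))"

definition min_hat :: "'a dtree \<Rightarrow> enat" where
  "min_hat u = Min (gamma_hat u ` {0..card (tTS u)})"

definition alpha_hat :: "'a dtree \<Rightarrow> nat" where
  "alpha_hat u = Min {k. k \<le> card (tTS u) \<and> gamma_hat u k = min_hat u}"

definition beta_hat :: "'a dtree \<Rightarrow> nat" where
  "beta_hat u = Max {k. k \<le> card (tTS u) \<and> gamma_hat u k = min_hat u}"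

definition property_P :: "'a dtree \<Rightarrow> bool" where
  "property_P u \<longleftrightarrow> (\<forall>k \<le> card (tTS u).
     (k \<le> alpha_hat u \<longrightarrow> gamma_hat u k = min_hat u + enat (alpha_hat u - k)) \<and>
     (beta_hat u \<le> k \<longrightarrow> gamma_hat u k = min_hat u + enat (k - beta_hat u)) \<and>
     (alpha_hat u < k \<and> k < beta_hat u \<and> even (k - alpha_hat u) \<longrightarrow> gamma_hat u k = min_hat u) \<and>
     (alpha_hat u < k \<and> k < beta_hat u \<and> odd (k - alpha_hat u) \<longrightarrow> gamma_hat u k = min_hat u + 1))"

end

(*
  A k-feasible set S of l \<oplus> r splits into a (k + m)-feasible set of l and an m-feasible set
  of r, where m counts the edges of the perfect matching of S - X that join the two twin sets:
  their endpoints become additional unmatched twins on both sides. Conversely, m unmatched twins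
  on each side can be paired off by such cross edges. By property (P) the two parts have sizes
  at least min(l) + (k + m - beta(l)) and min(r) + (alpha(r) - m), which add up to at least
  min(l) + min(r) + alpha(r) - beta(l). When alpha(r) > beta(l) the bound is attained for k = 0
  and m = min(alpha(r), |TS(l)|), which lies on the rising slope of l and the falling slope of r.
*)
theory Submission
  imports Defs
begin

lemma closed_nbhd_mono:
  assumes "fst G \<subseteq> fst H" "snd G \<subseteq> snd H" "S \<subseteq> T"
  shows "closed_nbhd G S \<subseteq> closed_nbhd H T"
  using assms unfolding closed_nbhd_def adj_def by blast

lemma perfect_matching_induced_iff:
  assumes "W \<subseteq> fst G"
  shows "perfect_matching (induced G W) M \<longleftrightarrow>
    M \<subseteq> snd G \<and> pairwise disjnt M \<and> \<Union>M = W"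
  using assms unfolding perfect_matching_def induced_def pairwise_def disjnt_def
  by auto

lemma pairwise_disjnt_Un:
  assumes "pairwise disjnt A" "pairwise disjnt B" "disjnt (\<Union>A) (\<Union>B)"
  shows "pairwise disjnt (A \<union> B)"
  using assms unfolding pairwise_def disjnt_def by blast

lemma pairwise_disjnt_pairs:
  assumes "inj_on f X" "disjnt X (f ` X)"
  shows "pairwise disjnt ((\<lambda>x. {x, f x}) ` X)"
  using assms unfolding pairwise_def disjnt_def inj_on_def by blast

lemma card_Union_Int_eq_card:
  assumes disjoint: "pairwise disjnt M" and one: "\<And>e. e \<in> M \<Longrightarrow> card (e \<inter> V) = 1"
  shows "card (\<Union>M \<inter> V) = card M"
proof -
  have inj: "inj_on (\<lambda>e. e \<inter> V) M"
  proof (rule inj_onI)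
    fix e e' assume "e \<in> M" "e' \<in> M" "e \<inter> V = e' \<inter> V"
    moreover have "e \<inter> V \<noteq> {}"
      using one[OF \<open>e \<in> M\<close>] by auto
    ultimately show "e = e'"
      using disjoint unfolding pairwise_def disjnt_def by blast
  qed
  have "\<Union>M \<inter> V = \<Union>((\<lambda>e. e \<inter> V) ` M)"
    by blast
  also have "card \<dots> = sum card ((\<lambda>e. e \<inter> V) ` M)"
  proof (rule card_Union_disjoint)
    show "pairwise disjnt ((\<lambda>e. e \<inter> V) ` M)"
      by (rule disjoint_image_subset[OF disjoint]) blast
    show "finite A" if "A \<in> (\<lambda>e. e \<inter> V) ` M" for A
      using that one by (auto intro: card_ge_0_finite)
  qed
  also have "\<dots> = card M"
    using one by (simp add: sum.reindex[OF inj])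
  finally show ?thesis .
qed

lemma Union_within_part:
  assumes disjoint: "pairwise disjnt M" and covered: "\<forall>e \<in> M. e \<subseteq> V1 \<union> V2"
    and "V1 \<inter> V2 = {}" "V \<in> {V1, V2}"
  shows "\<Union>{e \<in> M. e \<subseteq> V} = \<Union>M \<inter> V - \<Union>{e \<in> M. \<not> e \<subseteq> V1 \<and> \<not> e \<subseteq> V2}"
proof (intro equalityI subsetI)
  fix v assume "v \<in> \<Union>{e \<in> M. e \<subseteq> V}"
  then obtain e where e: "e \<in> M" "e \<subseteq> V" "v \<in> e"
    by blast
  have "e' = e" if "e' \<in> M" "v \<in> e'" for e'
    using disjoint e that unfolding pairwise_def disjnt_def by blast
  then show "v \<in> \<Union>M \<inter> V - \<Union>{e \<in> M. \<not> e \<subseteq> V1 \<and> \<not> e \<subseteq> V2}"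
    using e assms(4) by blast
next
  fix v assume v: "v \<in> \<Union>M \<inter> V - \<Union>{e \<in> M. \<not> e \<subseteq> V1 \<and> \<not> e \<subseteq> V2}"
  then obtain e where e: "e \<in> M" "v \<in> e" "e \<subseteq> V1 \<or> e \<subseteq> V2"
    by blast
  then have "e \<subseteq> V"
    using v assms(3,4) by blast
  then show "v \<in> \<Union>{e \<in> M. e \<subseteq> V}"
    using e by blast
qed

lemma join_matchings_by_pairs:
  assumes MA: "pairwise disjnt MA" "\<Union>MA = A - XA" and MB: "pairwise disjnt MB" "\<Union>MB = B - XB"
    and AB: "A \<inter> B = {}" and subsets: "Y \<subseteq> XA" "XA \<subseteq> A" "XB \<subseteq> B"
    and f: "bij_betw f Y XB"
  shows "pairwise disjnt (MA \<union> MB \<union> (\<lambda>a. {a, f a}) ` Y)"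
    and "\<Union>(MA \<union> MB \<union> (\<lambda>a. {a, f a}) ` Y) = A \<union> B - (XA - Y)"
proof -
  have Union_pairs: "\<Union>((\<lambda>a. {a, f a}) ` Y) = Y \<union> XB"
    using bij_betw_imp_surj_on[OF f] by blast
  have "disjnt Y (f ` Y)"
    using bij_betw_imp_surj_on[OF f] subsets AB unfolding disjnt_def by blast
  then have "pairwise disjnt ((\<lambda>a. {a, f a}) ` Y)"
    using bij_betw_imp_inj_on[OF f] by (intro pairwise_disjnt_pairs)
  then show "pairwise disjnt (MA \<union> MB \<union> (\<lambda>a. {a, f a}) ` Y)"
    using MA MB AB subsets
    by (intro pairwise_disjnt_Un) (auto simp: Union_pairs disjnt_def)
  show "\<Union>(MA \<union> MB \<union> (\<lambda>a. {a, f a}) ` Y) = A \<union> B - (XA - Y)"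
    unfolding Union_Un_distrib MA(2) MB(2) Union_pairs using subsets AB by blast
qed

lemma tTS_subset_tverts: "tTS t \<subseteq> tverts t"
  by (induction t rule: tTS.induct) auto

lemma finite_tverts: "finite (tverts t)"
  by (induction t) auto

lemma finite_tTS: "finite (tTS t)"
  using finite_subset[OF tTS_subset_tverts finite_tverts] .

lemma tTS_nonempty: "tTS t \<noteq> {}"
  by (induction t rule: tTS.induct) auto

lemma wf_dtree_nodes: "s \<in> nodes T \<Longrightarrow> wf_dtree T \<Longrightarrow> wf_dtree s"
  by (induction T) auto

lemma tedges_subset_tverts: "e \<in> tedges t \<Longrightarrow> e \<subseteq> tverts t"
  by (induction t rule: tedges.induct) (use tTS_subset_tverts in fastforce)+

lemma empty_notin_tedges: "{} \<notin> tedges t"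
  by (induction t rule: tedges.induct) auto

lemma tedges_Attach_within_child:
  assumes disj: "tverts l \<inter> tverts r = {}" and c: "c \<in> {l, r}"
    and e: "e \<in> tedges (Node Attach l r)" "e \<subseteq> tverts c"
  shows "e \<in> tedges c"
proof -
  have "e \<noteq> {}"
    using e(1) empty_notin_tedges by blast
  then have not_both: "\<not> e \<subseteq> tverts l \<inter> tverts r"
    using disj by blast
  consider "e \<in> tedges l" | "e \<in> tedges r" | a b where "a \<in> tTS l" "b \<in> tTS r" "e = {a, b}"
    using e(1) by auto
  then show ?thesis
  proof cases
    case 1
    then show ?thesis
      using c e(2) not_both tedges_subset_tverts[of e l] by blast
  next
    case 2
    then show ?thesis
      using c e(2) not_both tedges_subset_tverts[of e r] by blast
  next
    case 3
    then show ?thesis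
      using c e(2) disj tTS_subset_tverts[of l] tTS_subset_tverts[of r] by blast
  qed
qed

lemma tedges_Attach_at_non_twin:
  assumes "tverts l \<inter> tverts r = {}" "c \<in> {l, r}"
    and "e \<in> tedges (Node Attach l r)" "x \<in> e" "x \<in> tverts c - tTS c"
  shows "e \<in> tedges c"
  using assms tTS_subset_tverts[of l] tTS_subset_tverts[of r]
    tedges_subset_tverts[of e l] tedges_subset_tverts[of e r]
  by auto

lemma closed_nbhd_Attach_child:
  assumes "tverts l \<inter> tverts r = {}" "c \<in> {l, r}"
    and "x \<in> tverts c - tTS c" "x \<in> closed_nbhd (tgraph (Node Attach l r)) S"
  shows "x \<in> closed_nbhd (tgraph c) (S \<inter> tverts c)"
proof -
  have "s \<in> tverts c \<and> adj (tgraph c) s x"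
    if "s \<in> S" "adj (tgraph (Node Attach l r)) s x" for s
  proof -
    have "{s, x} \<in> tedges c"
      using tedges_Attach_at_non_twin[OF assms(1,2) _ _ assms(3)] that
      by (simp add: adj_def tgraph_def)
    then show ?thesis
      using tedges_subset_tverts[of "{s, x}" c] by (simp add: adj_def tgraph_def)
  qed
  then show ?thesis
    using assms(3,4) unfolding closed_nbhd_def by (auto simp: tgraph_def)
qed

lemma tedges_Attach_cross_Int_child:
  assumes disj: "tverts l \<inter> tverts r = {}" and c: "c \<in> {l, r}"
    and e: "e \<in> tedges (Node Attach l r)" "\<not> e \<subseteq> tverts l" "\<not> e \<subseteq> tverts r"
  shows "\<exists>x \<in> tTS c. e \<inter> tverts c = {x}"
proof -
  obtain a b where ab: "a \<in> tTS l" "b \<in> tTS r" "e = {a, b}"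
    using e tedges_subset_tverts[of e l] tedges_subset_tverts[of e r] by auto
  then have "e \<inter> tverts l = {a}" "e \<inter> tverts r = {b}"
    using disj tTS_subset_tverts[of l] tTS_subset_tverts[of r] by auto
  then show ?thesis
    using c ab by auto
qed

lemma closed_nbhd_Attach_join:
  assumes domA: "tverts l - tTS l \<subseteq> closed_nbhd (tgraph l) A"
    and domB: "tverts r - tTS r \<subseteq> closed_nbhd (tgraph r) B"
    and twin: "a \<in> A \<inter> tTS l"
  shows "tverts (Node Attach l r) - tTS l \<subseteq> closed_nbhd (tgraph (Node Attach l r)) (A \<union> B)"
proof
  let ?u = "Node Attach l r"
  fix x assume x: "x \<in> tverts ?u - tTS l"
  have child_nbhd: "closed_nbhd (tgraph c) C \<subseteq> closed_nbhd (tgraph ?u) (A \<union> B)"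
    if "c \<in> {l, r}" "C \<subseteq> A \<union> B" for c C
    using that by (intro closed_nbhd_mono) (auto simp: tgraph_def)
  consider "x \<in> tverts l - tTS l" | "x \<in> tverts r - tTS r" | "x \<in> tTS r"
    using x by auto
  then show "x \<in> closed_nbhd (tgraph ?u) (A \<union> B)"
  proof cases
    case 1
    then show ?thesis
      using domA child_nbhd[of l A] by blast
  next
    case 2
    then show ?thesis
      using domB child_nbhd[of r B] by blast
  next
    case 3
    then have "{a, x} \<in> tedges ?u"
      using twin by simp blast
    moreover have "x \<in> tverts ?u"
      using 3 tTS_subset_tverts[of r] by auto
    ultimately show ?thesis
      using twin unfolding closed_nbhd_def adj_def tgraph_def by auto
  qed
qed

lemma k_feasible_iff_matching:
  "k_feasible u k S \<longleftrightarrow> S \<subseteq> tverts u \<and> tverts u - tTS u \<subseteq> closed_nbhd (tgraph u) S \<and>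
    (\<exists>X M. X \<subseteq> S \<inter> tTS u \<and> card X = k \<and>
      M \<subseteq> tedges u \<and> pairwise disjnt M \<and> \<Union>M = S - X)"
proof -
  have "has_perfect_matching (induced (tgraph u) (S - X)) \<longleftrightarrow>
      (\<exists>M. M \<subseteq> tedges u \<and> pairwise disjnt M \<and> \<Union>M = S - X)"
    if "S \<subseteq> tverts u" for X
  proof -
    have "S - X \<subseteq> fst (tgraph u)"
      using that by (auto simp: tgraph_def)
    from perfect_matching_induced_iff[OF this] show ?thesis
      by (simp add: has_perfect_matching_def tgraph_def)
  qed
  then show ?thesis
    unfolding k_feasible_def by (cases "S \<subseteq> tverts u") simp_all
qed

lemma k_feasible_le_card_tTS: "k_feasible u k S \<Longrightarrow> k \<le> card (tTS u)"
  unfolding k_feasible_def by (metis card_mono finite_tTS le_infE)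

lemma k_feasible_finite: "k_feasible u k S \<Longrightarrow> finite S"
  unfolding k_feasible_def by (metis finite_tverts finite_subset)

definition cross_edges :: "'a dtree \<Rightarrow> 'a dtree \<Rightarrow> 'a set set \<Rightarrow> 'a set set" where
  "cross_edges l r M = {e \<in> M. \<not> e \<subseteq> tverts l \<and> \<not> e \<subseteq> tverts r}"

lemma k_feasible_Attach_restrict:
  assumes disj: "tverts l \<inter> tverts r = {}" and c: "c \<in> {l, r}"
    and dom: "tverts (Node Attach l r) - tTS l \<subseteq> closed_nbhd (tgraph (Node Attach l r)) S"
    and X: "X \<subseteq> S \<inter> tTS l"
    and M: "M \<subseteq> tedges (Node Attach l r)" "pairwise disjnt M" "\<Union>M = S - X"
  shows "k_feasible c (card (X \<inter> tverts c) + card (cross_edges l r M)) (S \<inter> tverts c)"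
proof -
  let ?u = "Node Attach l r" and ?Mc = "cross_edges l r M"
  have Mc_single: "\<exists>x \<in> tTS c. e \<inter> tverts c = {x}" if "e \<in> ?Mc" for e
    using that M(1) tedges_Attach_cross_Int_child[OF disj c] unfolding cross_edges_def by blast
  define Z where "Z = (X \<union> \<Union>?Mc) \<inter> tverts c"
  have "X \<inter> \<Union>?Mc = {}"
    using M(3) unfolding cross_edges_def by blast
  moreover have "card (\<Union>?Mc \<inter> tverts c) = card ?Mc"
  proof (rule card_Union_Int_eq_card)
    show "pairwise disjnt ?Mc"
      by (rule pairwise_subset[OF M(2)]) (auto simp: cross_edges_def)
    show "card (e \<inter> tverts c) = 1" if "e \<in> ?Mc" for e
      using Mc_single[OF that] by auto
  qed
  ultimately have card_Z: "card Z = card (X \<inter> tverts c) + card ?Mc"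
    unfolding Z_def Int_Un_distrib2 using finite_tverts[of c]
    by (subst card_Un_disjoint) auto
  have "\<Union>?Mc \<inter> tverts c \<subseteq> tTS c"
  proof
    fix x assume "x \<in> \<Union>?Mc \<inter> tverts c"
    then obtain e where "e \<in> ?Mc" "x \<in> e \<inter> tverts c"
      by blast
    then show "x \<in> tTS c"
      using Mc_single by (metis singletonD)
  qed
  then have Z_sub: "Z \<subseteq> S \<inter> tverts c \<inter> tTS c"
    using X M(3) c disj tTS_subset_tverts[of l] unfolding Z_def cross_edges_def by auto
  have "\<forall>e \<in> M. e \<subseteq> tverts l \<union> tverts r"
    using M(1) tedges_subset_tverts[of _ ?u] by auto
  then have "\<Union>{e \<in> M. e \<subseteq> tverts c} = \<Union>M \<inter> tverts c - \<Union>?Mc"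
    using Union_within_part[OF M(2) _ disj, of "tverts c"] c unfolding cross_edges_def by auto
  then have Union_c: "\<Union>{e \<in> M. e \<subseteq> tverts c} = S \<inter> tverts c - Z"
    unfolding M(3) Z_def by blast
  have edges_c: "{e \<in> M. e \<subseteq> tverts c} \<subseteq> tedges c"
    using tedges_Attach_within_child[OF disj c] M(1) by blast
  have "tverts c - tTS c \<subseteq> tverts ?u - tTS l"
    using c disj tTS_subset_tverts[of l] by auto
  then have dom_c: "tverts c - tTS c \<subseteq> closed_nbhd (tgraph c) (S \<inter> tverts c)"
    using closed_nbhd_Attach_child[OF disj c] dom by blast
  show ?thesis
    unfolding k_feasible_iff_matching
    using dom_c Z_sub card_Z edges_c pairwise_subset[OF M(2)] Union_c
    by (intro conjI exI[of _ Z] exI[of _ "{e \<in> M. e \<subseteq> tverts c}"]) auto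
qed

lemma k_feasible_Attach_split:
  assumes disj: "tverts l \<inter> tverts r = {}"
    and feasible: "k_feasible (Node Attach l r) k S"
  obtains m where "k_feasible l (k + m) (S \<inter> tverts l)" "k_feasible r m (S \<inter> tverts r)"
proof -
  obtain X M where X: "X \<subseteq> S \<inter> tTS l" "card X = k"
    and M: "M \<subseteq> tedges (Node Attach l r)" "pairwise disjnt M" "\<Union>M = S - X"
    and dom: "tverts (Node Attach l r) - tTS l \<subseteq> closed_nbhd (tgraph (Node Attach l r)) S"
    using feasible unfolding k_feasible_iff_matching by auto
  have "X \<inter> tverts l = X" "X \<inter> tverts r = {}"
    using X(1) disj tTS_subset_tverts[of l] by auto
  then show ?thesis
    using that k_feasible_Attach_restrict[OF disj _ dom X(1) M, of l]
      k_feasible_Attach_restrict[OF disj _ dom X(1) M, of r] X(2)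
    by simp
qed

text \<open>A twin of \<open>l\<close> left unmatched, which exists as \<open>0 < k + m\<close>, dominates the twin set
  of \<open>r\<close>.\<close>

lemma k_feasible_Attach_join:
  assumes disj: "tverts l \<inter> tverts r = {}"
    and left: "k_feasible l (k + m) A" and right: "k_feasible r m B" and pos: "0 < k + m"
  shows "k_feasible (Node Attach l r) k (A \<union> B)"
proof -
  let ?u = "Node Attach l r"
  obtain XA MA where XA: "XA \<subseteq> A \<inter> tTS l" "card XA = k + m"
    and MA: "MA \<subseteq> tedges l" "pairwise disjnt MA" "\<Union>MA = A - XA"
    and A: "A \<subseteq> tverts l" and domA: "tverts l - tTS l \<subseteq> closed_nbhd (tgraph l) A"
    using left unfolding k_feasible_iff_matching by blast
  obtain XB MB where XB: "XB \<subseteq> B \<inter> tTS r" "card XB = m"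
    and MB: "MB \<subseteq> tedges r" "pairwise disjnt MB" "\<Union>MB = B - XB"
    and B: "B \<subseteq> tverts r" and domB: "tverts r - tTS r \<subseteq> closed_nbhd (tgraph r) B"
    using right unfolding k_feasible_iff_matching by blast
  have fin_XA: "finite XA" and fin_XB: "finite XB"
    using XA(1) XB(1) finite_tTS by (meson finite_subset le_infE)+
  obtain Y where Y: "Y \<subseteq> XA" "card Y = m"
    using obtain_subset_with_card_n[of m XA] XA(2) by auto
  obtain f where f: "bij_betw f Y XB"
    using finite_same_card_bij[OF finite_subset[OF Y(1) fin_XA] fin_XB] Y(2) XB(2) by auto
  let ?M = "MA \<union> MB \<union> (\<lambda>a. {a, f a}) ` Y"
  have "A \<inter> B = {}"
    using A B disj by blast
  then have M: "pairwise disjnt ?M" "\<Union>?M = A \<union> B - (XA - Y)"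
    using join_matchings_by_pairs[OF MA(2,3) MB(2,3) _ Y(1) _ _ f] XA(1) XB(1) by auto
  have "XA \<noteq> {}"
    using XA(2) pos by auto
  then obtain a where a: "a \<in> A \<inter> tTS l"
    using XA(1) by blast
  have "?M \<subseteq> tedges ?u"
    using MA(1) MB(1) XA(1) XB(1) Y(1) bij_betw_apply[OF f] by auto blast
  moreover have "card (XA - Y) = k"
    using XA(2) Y fin_XA by (simp add: card_Diff_subset finite_subset)
  ultimately show ?thesis
    unfolding k_feasible_iff_matching
    using A B XA(1) M closed_nbhd_Attach_join[OF domA domB a]
    by (intro conjI exI[of _ "XA - Y"] exI[of _ ?M]) auto
qed

lemma gamma_hat_le_card: "k_feasible u k S \<Longrightarrow> gamma_hat u k \<le> enat (card S)"
  unfolding gamma_hat_def by (rule INF_lower) simp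

lemma gamma_hat_attained:
  assumes "gamma_hat u k = enat n"
  obtains S where "k_feasible u k S" "card S = n"
proof -
  let ?sizes = "(\<lambda>S. enat (card S)) ` {S. k_feasible u k S}"
  have "?sizes \<noteq> {}"
    using assms unfolding gamma_hat_def by (auto simp: Inf_enat_def split: if_splits)
  then have "Inf ?sizes \<in> ?sizes"
    unfolding Inf_enat_def by (auto intro: LeastI)
  then show ?thesis
    using assms that unfolding gamma_hat_def by auto
qed

lemma min_hat_le_gamma_hat: "k \<le> card (tTS u) \<Longrightarrow> min_hat u \<le> gamma_hat u k"
  unfolding min_hat_def by (rule Min_le) auto

lemma min_hat_attained: "\<exists>k \<le> card (tTS u). gamma_hat u k = min_hat u"
proof -
  have "min_hat u \<in> gamma_hat u ` {0..card (tTS u)}"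
    unfolding min_hat_def by (rule Min_in) auto
  then show ?thesis
    by auto
qed

lemma alpha_hat_le_card: "alpha_hat u \<le> card (tTS u)"
  and beta_hat_le_card: "beta_hat u \<le> card (tTS u)"
proof -
  let ?K = "{k. k \<le> card (tTS u) \<and> gamma_hat u k = min_hat u}"
  have "finite ?K" "?K \<noteq> {}"
    using min_hat_attained[of u] by auto
  then have "Min ?K \<in> ?K" "Max ?K \<in> ?K"
    by (rule Min_in, rule Max_in)
  then show "alpha_hat u \<le> card (tTS u)" "beta_hat u \<le> card (tTS u)"
    unfolding alpha_hat_def beta_hat_def by auto
qed

lemma property_P_right_slope:
  "property_P u \<Longrightarrow> beta_hat u \<le> k \<Longrightarrow> k \<le> card (tTS u) \<Longrightarrow>
    gamma_hat u k = min_hat u + enat (k - beta_hat u)"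
  unfolding property_P_def by blast

lemma property_P_left_slope:
  "property_P u \<Longrightarrow> k \<le> alpha_hat u \<Longrightarrow> k \<le> card (tTS u) \<Longrightarrow>
    gamma_hat u k = min_hat u + enat (alpha_hat u - k)"
  unfolding property_P_def by blast

lemma property_P_right_slope_le:
  assumes "property_P u" "k \<le> card (tTS u)"
  shows "min_hat u + enat (k - beta_hat u) \<le> gamma_hat u k"
proof (cases "beta_hat u \<le> k")
  case True
  then show ?thesis
    using property_P_right_slope[OF assms(1) _ assms(2)] by simp
next
  case False
  then show ?thesis
    using min_hat_le_gamma_hat[OF assms(2)] by (simp add: zero_enat_def[symmetric])
qed

lemma property_P_left_slope_le:
  assumes "property_P u" "k \<le> card (tTS u)"
  shows "min_hat u + enat (alpha_hat u - k) \<le> gamma_hat u k"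
proof (cases "k \<le> alpha_hat u")
  case True
  then show ?thesis
    using property_P_left_slope[OF assms(1) _ assms(2)] by simp
next
  case False
  then show ?thesis
    using min_hat_le_gamma_hat[OF assms(2)] by (simp add: zero_enat_def[symmetric])
qed

lemma min_hat_Attach_ge:
  assumes disj: "tverts l \<inter> tverts r = {}" and P: "property_P l" "property_P r"
  shows "min_hat l + min_hat r + enat (alpha_hat r - beta_hat l) \<le> min_hat (Node Attach l r)"
proof -
  let ?bound = "min_hat l + min_hat r + enat (alpha_hat r - beta_hat l)"
  have "?bound \<le> enat (card S)" if feasible: "k_feasible (Node Attach l r) k S" for k S
  proof -
    obtain m where left: "k_feasible l (k + m) (S \<inter> tverts l)"
      and right: "k_feasible r m (S \<inter> tverts r)"
      using k_feasible_Attach_split[OF disj feasible] by blast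
    have "S \<subseteq> tverts l \<union> tverts r"
      using feasible unfolding k_feasible_def by simp
    then have card_S: "card S = card (S \<inter> tverts l) + card (S \<inter> tverts r)"
      using disj k_feasible_finite[OF feasible]
      by (subst card_Un_disjoint[symmetric]) (auto intro: arg_cong[where f = card])
    have "?bound \<le> (min_hat l + enat (k + m - beta_hat l)) + (min_hat r + enat (alpha_hat r - m))"
      by (simp add: add.assoc add.left_commute add_left_mono)
    also have "\<dots> \<le> gamma_hat l (k + m) + gamma_hat r m"
      using property_P_right_slope_le[OF P(1) k_feasible_le_card_tTS[OF left]]
        property_P_left_slope_le[OF P(2) k_feasible_le_card_tTS[OF right]]
      by (rule add_mono)
    also have "\<dots> \<le> enat (card (S \<inter> tverts l)) + enat (card (S \<inter> tverts r))"
      using gamma_hat_le_card[OF left] gamma_hat_le_card[OF right] by (rule add_mono)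
    also have "\<dots> = enat (card S)"
      using card_S by simp
    finally show ?thesis .
  qed
  then have "?bound \<le> gamma_hat (Node Attach l r) k" for k
    unfolding gamma_hat_def by (blast intro: INF_greatest)
  then show ?thesis
    unfolding min_hat_def by (subst Min_ge_iff) auto
qed

lemma min_hat_Attach_le:
  assumes disj: "tverts l \<inter> tverts r = {}" and P: "property_P l" "property_P r"
    and less: "beta_hat l < alpha_hat r"
  shows "min_hat (Node Attach l r) \<le> min_hat l + min_hat r + enat (alpha_hat r - beta_hat l)"
proof (cases "min_hat l = \<infinity> \<or> min_hat r = \<infinity>")
  case True
  then show ?thesis
    by auto
next
  case False
  then obtain a b where a: "min_hat l = enat a" and b: "min_hat r = enat b"
    by auto
  define m where "m = min (alpha_hat r) (card (tTS l))"
  have m_pos: "0 < m"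
    using less tTS_nonempty[of l] finite_tTS[of l] unfolding m_def
    by (simp add: card_gt_0_iff)
  have "beta_hat l \<le> m"
    using less beta_hat_le_card[of l] unfolding m_def by simp
  then have "gamma_hat l m = enat (a + (m - beta_hat l))"
    using property_P_right_slope[OF P(1)] a unfolding m_def by simp
  then obtain A where A: "k_feasible l m A" "card A = a + (m - beta_hat l)"
    by (rule gamma_hat_attained)
  have "gamma_hat r m = enat (b + (alpha_hat r - m))"
    using property_P_left_slope[OF P(2)] alpha_hat_le_card[of r] b unfolding m_def by simp
  then obtain B where B: "k_feasible r m B" "card B = b + (alpha_hat r - m)"
    by (rule gamma_hat_attained)
  have "k_feasible (Node Attach l r) 0 (A \<union> B)"
    using k_feasible_Attach_join[OF disj _ B(1)] A(1) m_pos by simp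
  then have "min_hat (Node Attach l r) \<le> enat (card (A \<union> B))"
    using min_hat_le_gamma_hat[of 0] gamma_hat_le_card order_trans by blast
  also have "\<dots> \<le> enat (card A + card B)"
    by (simp add: card_Un_le)
  also have "card A + card B = a + b + (alpha_hat r - beta_hat l)"
    using A(2) B(2) less \<open>beta_hat l \<le> m\<close> unfolding m_def by simp
  finally show ?thesis
    using a b by simp
qed

theorem lemma44:
  fixes T :: "'a dtree" and G :: "'a graph" and vl vr :: "'a dtree"
  assumes "distance_hereditary G"
    and "decomposition_tree T G"
    and "Node Attach vl vr \<in> nodes T"
    and "property_P vl" and "property_P vr"
    and "alpha_hat vr > beta_hat vl"
  shows "min_hat (Node Attach vl vr) = min_hat vl + min_hat vr + enat (alpha_hat vr - beta_hat vl)"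
proof -
  have "wf_dtree (Node Attach vl vr)"
    using wf_dtree_nodes assms(2,3) unfolding decomposition_tree_def by blast
  then have disj: "tverts vl \<inter> tverts vr = {}"
    by simp
  show ?thesis
    using min_hat_Attach_le[OF disj assms(4,5,6)] min_hat_Attach_ge[OF disj assms(4,5)]
    by (rule order_antisym)
qed

end
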